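(* There exist two tree-child phylogenetic networks $N_{11}$ and $N_{12}$ on $S=\{1,2,3,4,5\}$ such that $N_{11}\not\cong N_{12}$, $\theta_{AB}(N_{11})=\theta_{AB}(N_{12})$, $\Psi(N_{11})=\Psi(N_{12})$, and the set of reticulation scenarios $\{RS(v)\}$ of hybrid nodes is the same in both.
   Context: A DAG $N=(V,E)$ is labeled in a finite set $S$ if its leaves (out-degree 0) are bijectively labeled by $S$; leaves are identified with their labels. A tree node has in-degree at most 1; a hybrid node has in-degree greater than 1. Isomorphism ($\cong$) means isomorphism of directed graphs preserving leaf labels. A tree child of a node is a child that is a tree node. A tree-child phylogenetic network on $S$ is a rooted DAG labeled in $S$ in which every non-leaf node has at least one tree child, no tree node has out-degree 1, and every hybrid node has out-degree exactly 1. For a node $u$: $C(u)$ is the set of leaves descending from $u$; $A(u)$ the set of leaves $s$ such that every path from the root to $s$ contains $u$; $B(u)=C(u)\setminus A(u)$. For an arc $e=(u,v)$: $\theta(e)=(A(v),B(v),S\setminus C(v))$; $\theta_{AB}(e)$ is that triple with each leaf $s\in A(v)\cup B(v)$ weighted by the maximum number of hybrid nodes on a path from $v$ to $s$ (including $v,s$); $\theta_{AB}(N)=\{\theta_{AB}(e)\mid e\in E\}$. An arc is a tree arc if its head is a tree node and a network arc otherwise. $RS(v)=\{C(u)\mid u$ a parent of $v\}$ for a hybrid node $v$. $\Psi(e)=\theta_{AB}(e)$ for a tree arc and $\Psi(e)=(\theta(e),RS(v))$ for a network arc with head $v$; $\Psi(N)=\{\Psi(e)\mid e\in E\}$. *)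

theory Defs
  imports Main
begin

(* A labelling
   lab maps the leaves bijectively onto the label set S; all leaf-set notions
   (C, A, B, theta, ...) are expressed in terms of labels. *)

definition parents :: "('v \<times> 'v) set \<Rightarrow> 'v \<Rightarrow> 'v set" where
  "parents E v = {u. (u, v) \<in> E}"

definition children :: "('v \<times> 'v) set \<Rightarrow> 'v \<Rightarrow> 'v set" where
  "children E u = {v. (u, v) \<in> E}"

definition indeg :: "('v \<times> 'v) set \<Rightarrow> 'v \<Rightarrow> nat" where
  "indeg E v = card (parents E v)"

definition outdeg :: "('v \<times> 'v) set \<Rightarrow> 'v \<Rightarrow> nat" where
  "outdeg E v = card (children E v)"

definition is_dag :: "'v set \<Rightarrow> ('v \<times> 'v) set \<Rightarrow> bool" where
  "is_dag V E \<longleftrightarrow> finite V \<and> E \<subseteq> V \<times> V \<and> acyclic E"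

definition leaves :: "'v set \<Rightarrow> ('v \<times> 'v) set \<Rightarrow> 'v set" where
  "leaves V E = {v \<in> V. outdeg E v = 0}"

definition is_tree_node :: "('v \<times> 'v) set \<Rightarrow> 'v \<Rightarrow> bool" where
  "is_tree_node E v \<longleftrightarrow> indeg E v \<le> 1"

definition is_hybrid :: "('v \<times> 'v) set \<Rightarrow> 'v \<Rightarrow> bool" where
  "is_hybrid E v \<longleftrightarrow> indeg E v > 1"

(* rooted: some node from which every node is reachable (in a DAG it is the
   unique node of in-degree 0) *)
definition is_root :: "'v set \<Rightarrow> ('v \<times> 'v) set \<Rightarrow> 'v \<Rightarrow> bool" where
  "is_root V E r \<longleftrightarrow> r \<in> V \<and> (\<forall>v\<in>V. (r, v) \<in> E\<^sup>*)"

definition rooted :: "'v set \<Rightarrow> ('v \<times> 'v) set \<Rightarrow> bool" where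
  "rooted V E \<longleftrightarrow> (\<exists>r. is_root V E r)"

definition root :: "'v set \<Rightarrow> ('v \<times> 'v) set \<Rightarrow> 'v" where
  "root V E = (THE r. is_root V E r)"

definition labeled_in :: "'v set \<Rightarrow> ('v \<times> 'v) set \<Rightarrow> ('v \<Rightarrow> 'l) \<Rightarrow> 'l set \<Rightarrow> bool" where
  "labeled_in V E lab S \<longleftrightarrow> bij_betw lab (leaves V E) S"

definition tree_child_network ::
  "'v set \<Rightarrow> ('v \<times> 'v) set \<Rightarrow> ('v \<Rightarrow> 'l) \<Rightarrow> 'l set \<Rightarrow> bool" where
  "tree_child_network V E lab S \<longleftrightarrow>
     is_dag V E \<and> rooted V E \<and> labeled_in V E lab S \<and>
     (\<forall>u\<in>V - leaves V E. \<exists>c\<in>children E u. is_tree_node E c) \<and>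
     (\<forall>u\<in>V. is_tree_node E u \<longrightarrow> outdeg E u \<noteq> 1) \<and>
     (\<forall>u\<in>V. is_hybrid E u \<longrightarrow> outdeg E u = 1)"

definition is_path :: "('v \<times> 'v) set \<Rightarrow> 'v \<Rightarrow> 'v \<Rightarrow> 'v list \<Rightarrow> bool" where
  "is_path E u v xs \<longleftrightarrow> xs \<noteq> [] \<and> hd xs = u \<and> last xs = v \<and>
     (\<forall>i. Suc i < length xs \<longrightarrow> (xs ! i, xs ! Suc i) \<in> E)"

definition Cl :: "'v set \<Rightarrow> ('v \<times> 'v) set \<Rightarrow> ('v \<Rightarrow> 'l) \<Rightarrow> 'v \<Rightarrow> 'l set" where
  "Cl V E lab u = lab ` {s \<in> leaves V E. (u, s) \<in> E\<^sup>*}"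

definition Al :: "'v set \<Rightarrow> ('v \<times> 'v) set \<Rightarrow> ('v \<Rightarrow> 'l) \<Rightarrow> 'v \<Rightarrow> 'l set" where
  "Al V E lab u = lab ` {s \<in> leaves V E.
      \<forall>xs. is_path E (root V E) s xs \<longrightarrow> u \<in> set xs}"

definition Bl :: "'v set \<Rightarrow> ('v \<times> 'v) set \<Rightarrow> ('v \<Rightarrow> 'l) \<Rightarrow> 'v \<Rightarrow> 'l set" where
  "Bl V E lab u = Cl V E lab u - Al V E lab u"

definition hyb_weight :: "('v \<times> 'v) set \<Rightarrow> 'v \<Rightarrow> 'v \<Rightarrow> nat" where
  "hyb_weight E v s = Max {length (filter (is_hybrid E) xs) | xs. is_path E v s xs}"

definition theta ::
  "'v set \<Rightarrow> ('v \<times> 'v) set \<Rightarrow> ('v \<Rightarrow> 'l) \<Rightarrow> 'l set \<Rightarrow> 'v \<times> 'v \<Rightarrow> 'l set \<times> 'l set \<times> 'l set" where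
  "theta V E lab S e = (Al V E lab (snd e), Bl V E lab (snd e), S - Cl V E lab (snd e))"

definition thetaAB ::
  "'v set \<Rightarrow> ('v \<times> 'v) set \<Rightarrow> ('v \<Rightarrow> 'l) \<Rightarrow> 'l set \<Rightarrow> 'v \<times> 'v
     \<Rightarrow> ('l \<times> nat) set \<times> ('l \<times> nat) set \<times> 'l set" where
  "thetaAB V E lab S e =
     ({(lab s, hyb_weight E (snd e) s) | s. s \<in> leaves V E \<and> lab s \<in> Al V E lab (snd e)},
      {(lab s, hyb_weight E (snd e) s) | s. s \<in> leaves V E \<and> lab s \<in> Bl V E lab (snd e)},
      S - Cl V E lab (snd e))"

definition thetaAB_net ::
  "'v set \<Rightarrow> ('v \<times> 'v) set \<Rightarrow> ('v \<Rightarrow> 'l) \<Rightarrow> 'l set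
     \<Rightarrow> (('l \<times> nat) set \<times> ('l \<times> nat) set \<times> 'l set) set" where
  "thetaAB_net V E lab S = thetaAB V E lab S ` E"

definition RS :: "'v set \<Rightarrow> ('v \<times> 'v) set \<Rightarrow> ('v \<Rightarrow> 'l) \<Rightarrow> 'v \<Rightarrow> 'l set set" where
  "RS V E lab v = Cl V E lab ` parents E v"

definition is_tree_arc :: "('v \<times> 'v) set \<Rightarrow> 'v \<times> 'v \<Rightarrow> bool" where
  "is_tree_arc E e \<longleftrightarrow> is_tree_node E (snd e)"

definition Psi ::
  "'v set \<Rightarrow> ('v \<times> 'v) set \<Rightarrow> ('v \<Rightarrow> 'l) \<Rightarrow> 'l set \<Rightarrow> 'v \<times> 'v
     \<Rightarrow> (('l \<times> nat) set \<times> ('l \<times> nat) set \<times> 'l set)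
        + (('l set \<times> 'l set \<times> 'l set) \<times> 'l set set)" where
  "Psi V E lab S e =
     (if is_tree_arc E e then Inl (thetaAB V E lab S e)
      else Inr (theta V E lab S e, RS V E lab (snd e)))"

definition Psi_net where
  "Psi_net V E lab S = Psi V E lab S ` E"

definition RS_net :: "'v set \<Rightarrow> ('v \<times> 'v) set \<Rightarrow> ('v \<Rightarrow> 'l) \<Rightarrow> 'l set set set" where
  "RS_net V E lab = {RS V E lab v | v. v \<in> V \<and> is_hybrid E v}"

definition net_iso ::
  "'v set \<Rightarrow> ('v \<times> 'v) set \<Rightarrow> ('v \<Rightarrow> 'l) \<Rightarrow> 'w set \<Rightarrow> ('w \<times> 'w) set \<Rightarrow> ('w \<Rightarrow> 'l) \<Rightarrow> bool" where
  "net_iso V1 E1 lab1 V2 E2 lab2 \<longleftrightarrow>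
     (\<exists>f. bij_betw f V1 V2 \<and>
          (\<forall>u\<in>V1. \<forall>v\<in>V1. (u, v) \<in> E1 \<longleftrightarrow> (f u, f v) \<in> E2) \<and>
          (\<forall>s\<in>leaves V1 E1. lab2 (f s) = lab1 s))"

end

theory Submission imports Defs begin

text \<open>
  Take for \<open>N\<^sub>1\<^sub>2\<close> the network obtained from \<open>N\<^sub>1\<^sub>1\<close> by contracting the tree arc
  \<open>(11, 9)\<close>. The nodes 9 and 11 of \<open>N\<^sub>1\<^sub>1\<close> have the same descendant leaves \<open>{2, 3, 5}\<close>,
  split in the same way into \<open>A = {2}\<close> and \<open>B = {3, 5}\<close>, with the same hybrid weights.
  Hence every arc of \<open>N\<^sub>1\<^sub>1\<close> is encoded exactly like its image in \<open>N\<^sub>1\<^sub>2\<close>, the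
  contracted arc being encoded like \<open>(12, 11)\<close>, and the reticulation scenario of the
  hybrid node 8 does not change. Since the encodings are sets, they coincide, although
  the two networks have 12 and 11 nodes. The encodings quantify over paths, which in an
  acyclic graph are finitely many and can be enumerated; so the comparisons of the
  concrete encodings are decided by evaluation.
\<close>

lemma is_path_Cons:
  "is_path E v s (x # ys) \<longleftrightarrow>
     x = v \<and> (if ys = [] then v = s else (v, hd ys) \<in> E \<and> is_path E (hd ys) s ys)"
proof (cases ys)
  case Nil
  then show ?thesis by (auto simp: is_path_def)
next
  case (Cons y zs)
  have "(\<forall>i. Suc i < length (x # ys) \<longrightarrow> ((x # ys) ! i, (x # ys) ! Suc i) \<in> E) \<longleftrightarrow>
        (x, y) \<in> E \<and> (\<forall>i. Suc i < length ys \<longrightarrow> (ys ! i, ys ! Suc i) \<in> E)"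
    (is "?L \<longleftrightarrow> ?R")
  proof
    assume L: ?L
    show ?R
    proof
      show "(x, y) \<in> E" using L[rule_format, of 0] Cons by simp
      show "\<forall>i. Suc i < length ys \<longrightarrow> (ys ! i, ys ! Suc i) \<in> E"
        using L by (metis Suc_less_eq length_Cons nth_Cons_Suc)
    qed
  next
    assume R: ?R
    show ?L
    proof (intro allI impI)
      fix i assume "Suc i < length (x # ys)"
      then show "((x # ys) ! i, (x # ys) ! Suc i) \<in> E" using R Cons by (cases i) auto
    qed
  qed
  then show ?thesis using Cons by (auto simp: is_path_def)
qed

lemma is_path_nth_trancl:
  assumes "is_path E v s xs" "i < j" "j < length xs"
  shows "(xs ! i, xs ! j) \<in> E\<^sup>+"
  using assms(2,3)
proof (induction j)
  case 0
  then show ?case by simp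
next
  case (Suc j)
  have "(xs ! j, xs ! Suc j) \<in> E" using assms(1) Suc.prems by (auto simp: is_path_def)
  then show ?case using Suc by (cases "i = j") auto
qed

lemma is_path_rtrancl: "is_path E u s xs \<Longrightarrow> (u, s) \<in> E\<^sup>*"
proof (induction xs arbitrary: u)
  case Nil
  then show ?case by (simp add: is_path_def)
next
  case (Cons x ys)
  show ?case
  proof (cases "ys = []")
    case True
    then show ?thesis using Cons.prems by (simp add: is_path_Cons)
  next
    case False
    then have "(u, hd ys) \<in> E" "is_path E (hd ys) s ys" using Cons.prems by (simp_all add: is_path_Cons)
    then show ?thesis using Cons.IH by (blast intro: converse_rtrancl_into_rtrancl)
  qed
qed

lemma rtrancl_iff_ex_is_path: "(u, s) \<in> E\<^sup>* \<longleftrightarrow> (\<exists>xs. is_path E u s xs)"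
proof
  show "(u, s) \<in> E\<^sup>* \<Longrightarrow> \<exists>xs. is_path E u s xs"
  proof (induction rule: converse_rtrancl_induct)
    case base
    have "is_path E s s [s]" by (simp add: is_path_def)
    then show ?case ..
  next
    case (step x y)
    then obtain ys where ys: "is_path E y s ys" by blast
    then have "ys \<noteq> []" "hd ys = y" by (auto simp: is_path_def)
    then have "is_path E x s (x # ys)" using ys step(1) by (simp add: is_path_Cons)
    then show ?case ..
  qed
qed (elim exE is_path_rtrancl)

lemma is_path_distinct: "acyclic E \<Longrightarrow> is_path E v s xs \<Longrightarrow> distinct xs"
  unfolding distinct_conv_nth acyclic_def
  by (metis is_path_nth_trancl linorder_neqE_nat)

lemma is_path_tl_subset_Range:
  assumes "is_path E v s xs"
  shows "set (tl xs) \<subseteq> Range E"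
proof
  fix x assume "x \<in> set (tl xs)"
  then obtain k where k: "k < length (tl xs)" "tl xs ! k = x" by (metis in_set_conv_nth)
  then have "(xs ! k, xs ! Suc k) \<in> E" using assms by (auto simp: is_path_def)
  moreover have "xs ! Suc k = x" using k assms by (cases xs) (auto simp: is_path_def)
  ultimately show "x \<in> Range E" by blast
qed

lemma is_path_length_le_card:
  assumes "acyclic E" "finite E" "is_path E v s xs"
  shows "length xs \<le> Suc (card E)"
proof -
  have "length (tl xs) = card (set (tl xs))"
    using is_path_distinct[OF assms(1,3)] by (simp add: distinct_card distinct_tl)
  also have "\<dots> \<le> card (Range E)"
    using is_path_tl_subset_Range[OF assms(3)] assms(2) by (simp add: card_mono finite_Range)
  also have "\<dots> \<le> card E"
    using assms(2) by (simp add: Range_snd card_image_le)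
  finally show ?thesis by simp
qed

fun paths_upto :: "nat \<Rightarrow> ('v \<times> 'v) list \<Rightarrow> 'v \<Rightarrow> 'v \<Rightarrow> 'v list list" where
  "paths_upto 0 El v s = []"
| "paths_upto (Suc n) El v s =
     (if v = s then [[v]] else []) @
     concat (map (\<lambda>c. map ((#) v) (paths_upto n El c s)) (map snd (filter (\<lambda>e. fst e = v) El)))"

lemma set_paths_upto:
  "set (paths_upto n El v s) = {xs. is_path (set El) v s xs \<and> length xs \<le> n}"
proof (induction n arbitrary: v)
  case 0
  then show ?case by (auto simp: is_path_def)
next
  case (Suc n)
  show ?case
  proof (intro set_eqI iffI)
    fix xs assume "xs \<in> set (paths_upto (Suc n) El v s)"
    then consider "v = s" "xs = [v]"
      | c ys where "(v, c) \<in> set El" "is_path (set El) c s ys" "length ys \<le> n" "xs = v # ys"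
      using Suc.IH by (force split: if_splits)
    then show "xs \<in> {xs. is_path (set El) v s xs \<and> length xs \<le> Suc n}"
    proof cases
      case 1
      then show ?thesis by (simp add: is_path_def)
    next
      case (2 c ys)
      then have "ys \<noteq> []" "hd ys = c" by (simp_all add: is_path_def)
      then show ?thesis using 2 by (simp add: is_path_Cons)
    qed
  next
    fix xs assume "xs \<in> {xs. is_path (set El) v s xs \<and> length xs \<le> Suc n}"
    then have p: "is_path (set El) v s xs" and l: "length xs \<le> Suc n" by auto
    then obtain ys where xs: "xs = v # ys" by (cases xs) (auto simp: is_path_def)
    show "xs \<in> set (paths_upto (Suc n) El v s)"
    proof (cases ys)
      case Nil
      then show ?thesis using p xs by (auto simp: is_path_Cons)
    next
      case (Cons y zs)
      then have "(v, y) \<in> set El" "ys \<in> set (paths_upto n El y s)"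
        using p xs l Suc.IH by (auto simp: is_path_Cons)
      then show ?thesis using xs by force
    qed
  qed
qed

declare paths_upto.simps [simp del]

lemma set_paths_upto_all:
  assumes "acyclic (set El)"
  shows "set (paths_upto (Suc (length El)) El v s) = {xs. is_path (set El) v s xs}"
proof -
  have "length xs \<le> Suc (length El)" if "is_path (set El) v s xs" for xs
    using is_path_length_le_card[OF assms finite_set that] card_length[of El] by linarith
  then show ?thesis by (auto simp: set_paths_upto)
qed

lemma rtrancl_iff_paths_upto:
  assumes "acyclic (set El)"
  shows "(u, s) \<in> (set El)\<^sup>* \<longleftrightarrow> paths_upto (Suc (length El)) El u s \<noteq> []"
proof -
  have "(u, s) \<in> (set El)\<^sup>* \<longleftrightarrow> {xs. is_path (set El) u s xs} \<noteq> {}"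
    by (auto simp: rtrancl_iff_ex_is_path)
  then show ?thesis by (simp add: set_paths_upto_all[OF assms, symmetric])
qed

lemma root_eqI:
  assumes "acyclic E" "is_root V E r"
  shows "root V E = r"
  unfolding root_def
proof (rule the_equality)
  fix r' assume "is_root V E r'"
  then have "(r, r') \<in> E\<^sup>*" "(r', r) \<in> E\<^sup>*" using assms(2) by (auto simp: is_root_def)
  then show "r' = r" using acyclic_impl_antisym_rtrancl[OF assms(1)] by (simp add: antisymD)
qed (fact assms(2))

lemma is_root_paths_upto:
  "acyclic (set El) \<Longrightarrow>
     is_root V (set El) r \<longleftrightarrow> r \<in> V \<and> (\<forall>v\<in>V. paths_upto (Suc (length El)) El r v \<noteq> [])"
  by (simp add: is_root_def rtrancl_iff_paths_upto)

lemma Cl_paths_upto: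
  "acyclic (set El) \<Longrightarrow>
     Cl V (set El) lab u =
       lab ` Set.filter (\<lambda>s. paths_upto (Suc (length El)) El u s \<noteq> []) (leaves V (set El))"
  by (auto simp: Cl_def rtrancl_iff_paths_upto)

lemma Al_paths_upto:
  "acyclic (set El) \<Longrightarrow>
     Al V (set El) lab u =
       lab ` Set.filter (\<lambda>s. \<forall>xs\<in>set (paths_upto (Suc (length El)) El (root V (set El)) s). u \<in> set xs)
         (leaves V (set El))"
  by (auto simp: Al_def set_paths_upto_all)

lemma hyb_weight_paths_upto:
  "acyclic (set El) \<Longrightarrow>
     hyb_weight (set El) v s =
       Max ((\<lambda>xs. length (filter (is_hybrid (set El)) xs)) `
         set (paths_upto (Suc (length El)) El v s))"
  by (simp add: hyb_weight_def set_paths_upto_all setcompr_eq_image)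

lemma rooted_iff_ex_root_in: "rooted V E \<longleftrightarrow> (\<exists>r\<in>V. is_root V E r)"
  unfolding rooted_def is_root_def by auto

lemma leaves_code [code]: "leaves V E = Set.filter (\<lambda>v. outdeg E v = 0) V"
  unfolding leaves_def by auto

lemma children_code [code]: "children (set El) v = set (map snd (filter (\<lambda>e. fst e = v) El))"
  unfolding children_def by (induction El) auto

lemma parents_code [code]: "parents (set El) v = set (map fst (filter (\<lambda>e. snd e = v) El))"
  unfolding parents_def by (induction El) auto

lemma thetaAB_code [code]:
  "thetaAB V E lab S e =
     ((\<lambda>s. (lab s, hyb_weight E (snd e) s)) ` Set.filter (\<lambda>s. lab s \<in> Al V E lab (snd e)) (leaves V E),
      (\<lambda>s. (lab s, hyb_weight E (snd e) s)) ` Set.filter (\<lambda>s. lab s \<in> Bl V E lab (snd e)) (leaves V E),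
      S - Cl V E lab (snd e))"
  unfolding thetaAB_def by auto

lemma RS_net_code [code]: "RS_net V E lab = RS V E lab ` Set.filter (is_hybrid E) V"
  unfolding RS_net_def by auto

lemma bij_betw_set_code [code]:
  "bij_betw f (set xs) B \<longleftrightarrow> distinct (map f (remdups xs)) \<and> f ` set xs = B"
  unfolding bij_betw_def by (metis distinct_map distinct_remdups set_remdups)

lemma net_iso_card_eq: "net_iso V1 E1 lab1 V2 E2 lab2 \<Longrightarrow> card V1 = card V2"
  unfolding net_iso_def by (blast dest: bij_betw_same_card)

text \<open>Nodes 1 to 5 are the leaves, labelled by the identity; node 12 is the root.\<close>

definition N11_arcs :: "(nat \<times> nat) list" where
  "N11_arcs = [(12, 4), (12, 11), (12, 10), (11, 9), (11, 6), (10, 1), (10, 8),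
               (9, 2), (9, 8), (8, 7), (7, 5), (7, 6), (6, 3)]"

definition N12_arcs :: "(nat \<times> nat) list" where
  "N12_arcs = [(12, 4), (12, 11), (12, 10), (11, 2), (11, 8), (11, 6), (10, 1), (10, 8),
               (8, 7), (7, 5), (7, 6), (6, 3)]"

definition N11_nodes :: "nat set" where "N11_nodes = set [1..<13]"

definition N12_nodes :: "nat set" where "N12_nodes = N11_nodes - {9}"

lemma acyclic_N11: "acyclic (set N11_arcs)"
  by code_simp

lemma acyclic_N12: "acyclic (set N12_arcs)"
  by code_simp

lemma is_root_N11: "is_root N11_nodes (set N11_arcs) 12"
  unfolding is_root_paths_upto[OF acyclic_N11] by code_simp

lemma root_N11: "root N11_nodes (set N11_arcs) = 12"
  by (rule root_eqI[OF acyclic_N11 is_root_N11])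

lemma is_root_N12: "is_root N12_nodes (set N12_arcs) 12"
  unfolding is_root_paths_upto[OF acyclic_N12] by code_simp

lemma root_N12: "root N12_nodes (set N12_arcs) = 12"
  by (rule root_eqI[OF acyclic_N12 is_root_N12])

lemmas N11_paths_upto =
  Cl_paths_upto[OF acyclic_N11] Al_paths_upto[OF acyclic_N11]
  hyb_weight_paths_upto[OF acyclic_N11] root_N11

lemmas N12_paths_upto =
  Cl_paths_upto[OF acyclic_N12] Al_paths_upto[OF acyclic_N12]
  hyb_weight_paths_upto[OF acyclic_N12] root_N12

lemma is_dag_N11: "is_dag N11_nodes (set N11_arcs)"
  unfolding is_dag_def
  by (intro conjI acyclic_N11) (simp_all add: N11_nodes_def N11_arcs_def)

lemma tree_child_N11: "tree_child_network N11_nodes (set N11_arcs) id {1, 2, 3, 4, 5}"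
  unfolding tree_child_network_def labeled_in_def rooted_iff_ex_root_in
    is_root_paths_upto[OF acyclic_N11]
  by (intro conjI is_dag_N11; code_simp)

lemma is_dag_N12: "is_dag N12_nodes (set N12_arcs)"
  unfolding is_dag_def
  by (intro conjI acyclic_N12) (simp_all add: N11_nodes_def N12_nodes_def N12_arcs_def)

lemma tree_child_N12: "tree_child_network N12_nodes (set N12_arcs) id {1, 2, 3, 4, 5}"
  unfolding tree_child_network_def labeled_in_def rooted_iff_ex_root_in
    is_root_paths_upto[OF acyclic_N12]
  by (intro conjI is_dag_N12; code_simp)

lemma not_iso_N11_N12: "\<not> net_iso N11_nodes (set N11_arcs) id N12_nodes (set N12_arcs) id"
proof
  assume "net_iso N11_nodes (set N11_arcs) id N12_nodes (set N12_arcs) id"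
  then have "card N11_nodes = card N12_nodes" by (rule net_iso_card_eq)
  then show False by (simp add: N11_nodes_def N12_nodes_def)
qed

lemma thetaAB_net_N11_N12:
  "thetaAB_net N11_nodes (set N11_arcs) id {1, 2, 3, 4, 5} =
   thetaAB_net N12_nodes (set N12_arcs) id {1, 2, 3, 4, 5}"
  unfolding thetaAB_net_def thetaAB_code Bl_def N11_paths_upto N12_paths_upto
  by code_simp

lemma Psi_net_N11_N12:
  "Psi_net N11_nodes (set N11_arcs) id {1, 2, 3, 4, 5} =
   Psi_net N12_nodes (set N12_arcs) id {1, 2, 3, 4, 5}"
  unfolding Psi_net_def Psi_def theta_def RS_def thetaAB_code Bl_def N11_paths_upto N12_paths_upto
  by code_simp

lemma RS_net_N11_N12: "RS_net N11_nodes (set N11_arcs) id = RS_net N12_nodes (set N12_arcs) id"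
  unfolding RS_net_code RS_def N11_paths_upto N12_paths_upto
  by code_simp

theorem mainTheorem5:
  shows "\<exists>(V1 :: nat set) E1 (lab1 :: nat \<Rightarrow> nat) (V2 :: nat set) E2 (lab2 :: nat \<Rightarrow> nat).
     tree_child_network V1 E1 lab1 {1,2,3,4,5} \<and>
     tree_child_network V2 E2 lab2 {1,2,3,4,5} \<and>
     \<not> net_iso V1 E1 lab1 V2 E2 lab2 \<and>
     thetaAB_net V1 E1 lab1 {1,2,3,4,5} = thetaAB_net V2 E2 lab2 {1,2,3,4,5} \<and>
     Psi_net V1 E1 lab1 {1,2,3,4,5} = Psi_net V2 E2 lab2 {1,2,3,4,5} \<and>
     RS_net V1 E1 lab1 = RS_net V2 E2 lab2"
  using tree_child_N11 tree_child_N12 not_iso_N11_N12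
    thetaAB_net_N11_N12 Psi_net_N11_N12 RS_net_N11_N12
  by blast

end
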